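(* Consider the fine-grid operators $A=A^T\le 0$, $A\in\mathbb{R}^{N\times N}$, and diagonal $B>0$, split over subdomains $\Omega_i$, $i=1,\ldots,N_c$, as $A+\omega^2B=\sum_i P_i(A_i+\omega^2B_i)P_i^T$ with $A_i\le 0$, $B_i>0$, where the subdomains are coupled only through their pairwise intersections $\Gamma_{ij}$ (assumed to contain no "corner" nodes shared by more than two subdomains). For each subdomain, let $S_i$ be a block-diagonal matrix with orthonormal-column blocks $S_{ij}$ (compressing the boundary $\Gamma_{ij}$ to $\widetilde K_{ij}$ degrees of freedom, $\widetilde K_i=\sum_j \widetilde K_{ij}$), and let $\widetilde F_i^m(\omega^2)=(S_i^m)^T(A_i^m+\omega^2B_i^m)^{-1}S_i^m$ be the reduced-order model of the projected Neumann-to-Dirichlet map obtained by Galerkin projection of $A_i,B_i$ and of the boundary inputs onto an orthonormal basis of the block rational Krylov subspace of dimension $m\widetilde K_i$. Assume that for every subdomain the McMillan degree of $\widetilde F_i^m$ equals $2m\widetilde K_i$, so that $\widetilde F_i^m$ admits a matrix Stieltjes continued fraction (S-fraction) representation with symmetric positive definite coefficients $L_i^k,\widehat L_i^k\in\mathbb{R}^{\widetilde K_i\times\widetilde K_i}$, $k=1,\ldots,m$. Define the multiscale ROM map $\widetilde F^m(\lambda):\widetilde g\mapsto\widetilde u$, where $\widetilde g,\widetilde u\in\mathbb{R}^{\widetilde K}$, $\widetilde K=\sum_{i,j}\widetilde K_{ij}$, are the direct sums of $\widetilde g_{ij}=S_{ij}^Tg|_{\Gamma_{ij}}$ and $\widetilde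 u_{ij}$ over adjacent pairs, and $\widetilde u$ is obtained by solving, for all $i$ and all adjacent $j$, $L_i^k(U_i^{k+1}-U_i^k)-L_i^{k-1}(U_i^k-U_i^{k-1})+\lambda(\widehat L_i^k)^{-1}U_i^k=0$, $k=2,\ldots,m$, $U_i^{m+1}=0$; $\widetilde P_{ij}^T L_i^1(U_i^2-U_i^1)+\widetilde P_{ji}^T L_j^1(U_j^2-U_j^1)+\lambda\big(\widetilde P_{ij}^T(\widehat L_i^1)^{-1}U_i^1+\widetilde P_{ji}^T(\widehat L_j^1)^{-1}U_j^1\big)=\widetilde g_{ij}$; $\widetilde u_{ij}=\widetilde P_{ij}^TU_i^1=\widetilde P_{ji}^TU_j^1$, with $\widetilde P_{ij}^T$ the restriction from the $\widetilde K_i$ compressed boundary unknowns of $\Omega_i$ to those associated with $\Gamma_{ij}$. Then $\widetilde F^m(\lambda)$ is a $(0,\infty)$-Stieltjes function of order $\widetilde K$, i.e. it is holomorphic in $\mathbb{C}\setminus(0,+\infty)$, $\operatorname{Im}\widetilde F^m(\lambda)$ is Hermitian non-negative definite for $\operatorname{Im}\lambda>0$, and $\widetilde F^m(\lambda)$ is Hermitian non-negative definite for $\lambda\in(-\infty,0)$. Moreover, non-negative definiteness can be replaced by positive definiteness in the last two conditions.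
   Context: Setting: multiscale S-fraction reduced-order model (MSSFROM) for the semi-discrete wave problem $Au-Bu_{tt}=g\delta(t)$, with inputs/outputs supported on the partition skeleton $\Gamma=\bigcup\Gamma_i$.
   Formalization: $-\widetilde F^m(\lambda)$ stands in place of $\widetilde F^m(\lambda)$ as the $(0,\infty)$-Stieltjes function of order $\widetilde K$, both with non-negative and with positive definiteness in the last two conditions. The statement above fails without it. *)

theory Defs
  imports "HOL-Analysis.Analysis"
begin

text \<open>Subdomains are \<open>i < Nc\<close>; \<open>adj i j\<close> means that \<open>\<Omega>_i\<close> and \<open>\<Omega>_j\<close> share an interface \<open>\<Gamma>_ij\<close>;
  \<open>Kt i j\<close> is the number \<open>K~_ij\<close> of compressed degrees of freedom on \<open>\<Gamma>_ij\<close>.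
  The \<open>K~_i\<close> compressed boundary unknowns of \<open>\<Omega>_i\<close> are indexed by pairs \<open>(j,a)\<close>
  with \<open>adj i j\<close> and \<open>a < Kt i j\<close>; the restriction \<open>P~_ij^T\<close> picks the components
  \<open>(j,a)\<close>, \<open>a < Kt i j\<close>.  The interface unknowns \<open>g~, u~\<close> (direct sum over adjacent
  unordered pairs) are indexed by triples \<open>(i,j,a)\<close> with \<open>i < j\<close>.\<close>

definition bnd :: "nat \<Rightarrow> (nat \<Rightarrow> nat \<Rightarrow> bool) \<Rightarrow> (nat \<Rightarrow> nat \<Rightarrow> nat) \<Rightarrow> nat \<Rightarrow> (nat \<times> nat) set" where
  "bnd Nc adj Kt i = {(j, a). j < Nc \<and> adj i j \<and> a < Kt i j}"

definition iface :: "nat \<Rightarrow> (nat \<Rightarrow> nat \<Rightarrow> bool) \<Rightarrow> (nat \<Rightarrow> nat \<Rightarrow> nat) \<Rightarrow> (nat \<times> nat \<times> nat) set" where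
  "iface Nc adj Kt = {(i, j, a). i < Nc \<and> j < Nc \<and> i < j \<and> adj i j \<and> a < Kt i j}"

definition spd_on :: "'i set \<Rightarrow> ('i \<Rightarrow> 'i \<Rightarrow> real) \<Rightarrow> bool" where
  "spd_on I M \<longleftrightarrow> (\<forall>x\<in>I. \<forall>y\<in>I. M x y = M y x) \<and>
     (\<forall>v. (\<exists>x\<in>I. v x \<noteq> 0) \<longrightarrow> 0 < (\<Sum>x\<in>I. \<Sum>y\<in>I. v x * M x y * v y))"

definition herm_psd :: "'i set \<Rightarrow> ('i \<Rightarrow> 'i \<Rightarrow> complex) \<Rightarrow> bool" where
  "herm_psd I M \<longleftrightarrow> (\<forall>x\<in>I. \<forall>y\<in>I. M y x = cnj (M x y)) \<and>
     (\<forall>v. 0 \<le> Re (\<Sum>x\<in>I. \<Sum>y\<in>I. cnj (v x) * M x y * v y))"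

definition herm_pd :: "'i set \<Rightarrow> ('i \<Rightarrow> 'i \<Rightarrow> complex) \<Rightarrow> bool" where
  "herm_pd I M \<longleftrightarrow> (\<forall>x\<in>I. \<forall>y\<in>I. M y x = cnj (M x y)) \<and>
     (\<forall>v. (\<exists>x\<in>I. v x \<noteq> 0) \<longrightarrow> 0 < Re (\<Sum>x\<in>I. \<Sum>y\<in>I. cnj (v x) * M x y * v y))"

definition mat_Im :: "('i \<Rightarrow> 'i \<Rightarrow> complex) \<Rightarrow> 'i \<Rightarrow> 'i \<Rightarrow> complex" where
  "mat_Im M x y = (M x y - cnj (M y x)) / (2 * \<i>)"

definition pos_ray :: "complex set" where
  "pos_ray = complex_of_real ` {0<..}"

definition stieltjes_0inf :: "'i set \<Rightarrow> (complex \<Rightarrow> 'i \<Rightarrow> 'i \<Rightarrow> complex) \<Rightarrow> bool" where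
  "stieltjes_0inf I F \<longleftrightarrow>
     (\<forall>x\<in>I. \<forall>y\<in>I. (\<lambda>z. F z x y) holomorphic_on (- pos_ray)) \<and>
     (\<forall>z. 0 < Im z \<longrightarrow> herm_psd I (mat_Im (F z))) \<and>
     (\<forall>t::real. t < 0 \<longrightarrow> herm_psd I (F (complex_of_real t)))"

definition mv :: "'i set \<Rightarrow> ('i \<Rightarrow> 'i \<Rightarrow> real) \<Rightarrow> ('i \<Rightarrow> complex) \<Rightarrow> 'i \<Rightarrow> complex" where
  "mv I M U x = (\<Sum>y\<in>I. complex_of_real (M x y) * U y)"

text \<open>\<open>U\<close> solves the multiscale S-fraction system with spectral parameter \<open>lam\<close> and
  input \<open>g\<close>.  \<open>U i k\<close> is the vector \<open>U_i^k\<close> (\<open>k = 1..m\<close>), extended by zero outside the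
  valid index range (so in particular \<open>U_i^{m+1} = 0\<close>).  \<open>Lhi i k\<close> is \<open>(L^_i^k)^{-1}\<close>.\<close>
definition msfrom_solves ::
  "nat \<Rightarrow> (nat \<Rightarrow> nat \<Rightarrow> bool) \<Rightarrow> (nat \<Rightarrow> nat \<Rightarrow> nat) \<Rightarrow> nat \<Rightarrow>
   (nat \<Rightarrow> nat \<Rightarrow> (nat \<times> nat) \<Rightarrow> (nat \<times> nat) \<Rightarrow> real) \<Rightarrow>
   (nat \<Rightarrow> nat \<Rightarrow> (nat \<times> nat) \<Rightarrow> (nat \<times> nat) \<Rightarrow> real) \<Rightarrow>
   complex \<Rightarrow> (nat \<times> nat \<times> nat \<Rightarrow> complex) \<Rightarrow> (nat \<Rightarrow> nat \<Rightarrow> (nat \<times> nat) \<Rightarrow> complex) \<Rightarrow> bool" where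
  "msfrom_solves Nc adj Kt m L Lhi lam g U \<longleftrightarrow>
     (\<forall>i k x. \<not> (i < Nc \<and> 1 \<le> k \<and> k \<le> m \<and> x \<in> bnd Nc adj Kt i) \<longrightarrow> U i k x = 0) \<and>
     (\<forall>i<Nc. \<forall>k\<in>{2..m}. \<forall>x\<in>bnd Nc adj Kt i.
        mv (bnd Nc adj Kt i) (L i k) (\<lambda>y. U i (k+1) y - U i k y) x
      - mv (bnd Nc adj Kt i) (L i (k-1)) (\<lambda>y. U i k y - U i (k-1) y) x
      + lam * mv (bnd Nc adj Kt i) (Lhi i k) (U i k) x = 0) \<and>
     (\<forall>(i,j,a)\<in>iface Nc adj Kt.
        mv (bnd Nc adj Kt i) (L i 1) (\<lambda>y. U i 2 y - U i 1 y) (j,a)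
      + mv (bnd Nc adj Kt j) (L j 1) (\<lambda>y. U j 2 y - U j 1 y) (i,a)
      + lam * (mv (bnd Nc adj Kt i) (Lhi i 1) (U i 1) (j,a)
             + mv (bnd Nc adj Kt j) (Lhi j 1) (U j 1) (i,a)) = g (i,j,a)) \<and>
     (\<forall>(i,j,a)\<in>iface Nc adj Kt. U i 1 (j,a) = U j 1 (i,a))"

definition msfrom_output :: "(nat \<Rightarrow> nat \<Rightarrow> (nat \<times> nat) \<Rightarrow> complex) \<Rightarrow> nat \<times> nat \<times> nat \<Rightarrow> complex" where
  "msfrom_output U t = (case t of (i, j, a) \<Rightarrow> U i 1 (j, a))"

end

theory Submission
  imports Defs "Jordan_Normal_Form.Determinant"
begin

text \<open>The unknowns and the equations of the multiscale S-fraction system are both indexed by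
  the degrees of freedom (i, k, x), so the system is a square matrix depending affinely on \<lambda>.
  Testing the k-th recurrence of \<Omega>_i with U_i^k and summing by parts over k gives, per
  subdomain, \<langle>U_i^1, flux_i\<rangle> = \<lambda> P_i - Q_i, where P_i = \<Sum>_k \<langle>U_i^k, (Lh_i^k)^-1 U_i^k\<rangle> and
  Q_i = \<Sum>_k \<langle>U_i^(k+1) - U_i^k, L_i^k (U_i^(k+1) - U_i^k)\<rangle> are nonnegative.  By continuity on
  \<Gamma>_ij the boundary terms of \<Omega>_i and \<Omega>_j add up to the input, so \<langle>u, g\<rangle> = \<lambda> P - Q.
  For \<lambda> \<notin> (0, \<infinity>) this leaves only the trivial solution of the homogeneous system, so the
  system matrix is invertible, with an inverse holomorphic in \<lambda> by Cramer's rule.  The transfer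
  function F then satisfies \<langle>g, -F g\<rangle> = Q - cnj \<lambda> P, whose imaginary part is Im \<lambda> P and which
  equals Q - \<lambda> P for real \<lambda> < 0; positivity comes from P > 0 for g \<noteq> 0.\<close>

section \<open>Holomorphic inverse of a matrix family\<close>

lemma holomorphic_on_det_mat:
  fixes C :: "complex \<Rightarrow> nat \<Rightarrow> nat \<Rightarrow> complex"
  assumes "\<And>i j. (\<lambda>z. C z i j) holomorphic_on S"
  shows "(\<lambda>z. Determinant.det (mat n n (\<lambda>(i, j). C z i j))) holomorphic_on S"
proof -
  have "Determinant.det (mat n n (\<lambda>(i, j). C z i j)) =
      (\<Sum>p | p permutes {0..<n}. of_int (sign p) * (\<Prod>i = 0..<n. C z i (p i)))" for z
    by (subst det_def') (auto intro!: sum.cong prod.cong simp: permutes_in_image)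
  then show ?thesis
    by (simp only:) (intro holomorphic_intros assms)
qed

lemma index_mult_mat_sum:
  assumes "X \<in> carrier_mat n n" "Y \<in> carrier_mat n n" "i < n" "k < n"
  shows "(X * Y) $$ (i, k) = (\<Sum>j<n. X $$ (i, j) * Y $$ (j, k))"
  using assms by (simp add: scalar_prod_def lessThan_atLeast0)

lemma det_mat_nonzero_if_injective:
  fixes A :: "nat \<Rightarrow> nat \<Rightarrow> 'a::field"
  assumes "\<And>v. \<forall>i<n. (\<Sum>j<n. A i j * v j) = 0 \<Longrightarrow> \<forall>j<n. v j = 0"
  shows "Determinant.det (mat n n (\<lambda>(i, j). A i j)) \<noteq> 0"
proof
  let ?M = "mat n n (\<lambda>(i, j). A i j)"
  assume "Determinant.det ?M = 0"
  then obtain v where v: "v \<in> carrier_vec n" "v \<noteq> 0\<^sub>v n" "?M *\<^sub>v v = 0\<^sub>v n"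
    using det_0_iff_vec_prod_zero_field[of ?M n] by auto
  have "(\<Sum>j<n. A i j * vec_index v j) = vec_index (?M *\<^sub>v v) i" if "i < n" for i
    using that v(1) by (simp add: scalar_prod_def lessThan_atLeast0)
  then have "\<forall>j<n. vec_index v j = 0"
    using assms v(3) by simp
  then show False
    using v(1,2) by auto
qed

lemma holomorphic_on_cofactor:
  fixes A :: "complex \<Rightarrow> nat \<Rightarrow> nat \<Rightarrow> complex"
  assumes "\<And>i j. (\<lambda>z. A z i j) holomorphic_on S" and "i < n" "j < n"
  shows "(\<lambda>z. cofactor (mat n n (\<lambda>(i, j). A z i j)) i j) holomorphic_on S"
proof -
  define skip where "skip l a = (if a < l then a else Suc a)" for l a :: nat
  have "mat_delete (mat n n (\<lambda>(i, j). A z i j)) i j =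
      mat (n - 1) (n - 1) (\<lambda>(a, b). A z (skip i a) (skip j b))" for z
    using assms(2,3) by (intro eq_matI) (auto simp: mat_delete_def skip_def)
  then show ?thesis
    unfolding cofactor_def
    by (simp only:) (intro holomorphic_intros holomorphic_on_det_mat assms(1))
qed

lemma holomorphic_matrix_inverse_nat:
  fixes A :: "complex \<Rightarrow> nat \<Rightarrow> nat \<Rightarrow> complex"
  assumes hol: "\<And>i j. (\<lambda>z. A z i j) holomorphic_on S"
    and inj: "\<And>z v. z \<in> S \<Longrightarrow> \<forall>i<n. (\<Sum>j<n. A z i j * v j) = 0 \<Longrightarrow> \<forall>j<n. v j = 0"
  obtains B where "\<And>i j. (\<lambda>z. B z i j) holomorphic_on S"
    and "\<And>z i k. z \<in> S \<Longrightarrow> i < n \<Longrightarrow> k < n \<Longrightarrow> (\<Sum>j<n. B z i j * A z j k) = of_bool (i = k)"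
    and "\<And>z i k. z \<in> S \<Longrightarrow> i < n \<Longrightarrow> k < n \<Longrightarrow> (\<Sum>j<n. A z i j * B z j k) = of_bool (i = k)"
proof -
  define M where "M z = mat n n (\<lambda>(i, j). A z i j)" for z
  have M: "M z \<in> carrier_mat n n" for z
    by (simp add: M_def)
  have det_nonzero: "Determinant.det (M z) \<noteq> 0" if "z \<in> S" for z
    unfolding M_def using inj[OF that] by (rule det_mat_nonzero_if_injective)
  define B where
    "B z i j = (if i < n \<and> j < n then cofactor (M z) j i / Determinant.det (M z) else 0)" for z i j
  have "(\<lambda>z. B z i j) holomorphic_on S" for i j
  proof (cases "i < n \<and> j < n")
    case True
    moreover have "(\<lambda>z. Determinant.det (M z)) holomorphic_on S"
      unfolding M_def by (rule holomorphic_on_det_mat[OF hol])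
    ultimately show ?thesis
      using det_nonzero holomorphic_on_cofactor[OF hol, of j n i]
      by (simp add: B_def M_def holomorphic_on_divide)
  next
    case False
    then have "B z i j = 0" for z
      by (auto simp: B_def)
    then show ?thesis
      by simp
  qed
  moreover have "(\<Sum>j<n. B z i j * A z j k) = of_bool (i = k)"
    if "z \<in> S" "i < n" "k < n" for z i k
  proof -
    have "(\<Sum>j<n. B z i j * A z j k) = (adj_mat (M z) * M z) $$ (i, k) / Determinant.det (M z)"
      using that by (subst index_mult_mat_sum[OF adj_mat(1)[OF M] M])
        (simp_all add: B_def adj_mat_def M_def sum_divide_distrib)
    also have "\<dots> = of_bool (i = k)"
      using adj_mat(3)[OF M] that det_nonzero by simp
    finally show ?thesis .
  qed
  moreover have "(\<Sum>j<n. A z i j * B z j k) = of_bool (i = k)"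
    if "z \<in> S" "i < n" "k < n" for z i k
  proof -
    have "(\<Sum>j<n. A z i j * B z j k) = (M z * adj_mat (M z)) $$ (i, k) / Determinant.det (M z)"
      using that by (subst index_mult_mat_sum[OF M adj_mat(1)[OF M]])
        (simp_all add: B_def adj_mat_def M_def sum_divide_distrib)
    also have "\<dots> = of_bool (i = k)"
      using adj_mat(2)[OF M] that det_nonzero by simp
    finally show ?thesis .
  qed
  ultimately show ?thesis
    using that by blast
qed

lemma holomorphic_matrix_inverse:
  fixes A :: "complex \<Rightarrow> 'a \<Rightarrow> 'a \<Rightarrow> complex"
  assumes D: "finite D" and hol: "\<And>x y. (\<lambda>z. A z x y) holomorphic_on S"
    and inj: "\<And>z v. z \<in> S \<Longrightarrow> \<forall>x\<in>D. (\<Sum>y\<in>D. A z x y * v y) = 0 \<Longrightarrow> \<forall>y\<in>D. v y = 0"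
  obtains B where "\<And>x y. (\<lambda>z. B z x y) holomorphic_on S"
    and "\<And>z x w. z \<in> S \<Longrightarrow> x \<in> D \<Longrightarrow> w \<in> D \<Longrightarrow> (\<Sum>y\<in>D. B z x y * A z y w) = of_bool (x = w)"
    and "\<And>z x w. z \<in> S \<Longrightarrow> x \<in> D \<Longrightarrow> w \<in> D \<Longrightarrow> (\<Sum>y\<in>D. A z x y * B z y w) = of_bool (x = w)"
proof -
  define n where "n = card D"
  obtain h where h: "bij_betw h {..<n} D"
    using ex_bij_betw_nat_finite[OF D] by (auto simp: n_def atLeast0LessThan)
  define hi where "hi = the_inv_into {..<n} h"
  have h_hi: "h (hi x) = x" and hi_lt: "hi x < n" if "x \<in> D" for x
    using that h unfolding hi_def
    by (simp_all add: f_the_inv_into_f_bij_betw)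
      (metis lessThan_iff bij_betwE bij_betw_the_inv_into)
  have hi_h: "hi (h j) = j" if "j < n" for j
    using that h by (simp add: hi_def bij_betw_def the_inv_into_f_f)
  have reindex: "(\<Sum>y\<in>D. f y) = (\<Sum>j<n. f (h j))" for f :: "'a \<Rightarrow> complex"
    by (rule sum.reindex_bij_betw[OF h, symmetric])
  have inj_nat: "\<forall>j<n. v j = 0"
    if "z \<in> S" "\<forall>i<n. (\<Sum>j<n. A z (h i) (h j) * v j) = 0" for z v
  proof -
    have "\<forall>x\<in>D. (\<Sum>y\<in>D. A z x y * v (hi y)) = 0"
    proof
      fix x assume "x \<in> D"
      then show "(\<Sum>y\<in>D. A z x y * v (hi y)) = 0"
        using that(2)[rule_format, of "hi x"] hi_lt[of x] h_hi[of x] by (simp add: reindex hi_h)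
    qed
    then have "\<forall>y\<in>D. v (hi y) = 0"
      by (rule inj[OF that(1)])
    then show ?thesis
      using h hi_h by (metis bij_betwE lessThan_iff)
  qed
  obtain Bn where hol_Bn: "\<And>i j. (\<lambda>z. Bn z i j) holomorphic_on S"
    and left: "\<And>z i k. z \<in> S \<Longrightarrow> i < n \<Longrightarrow> k < n \<Longrightarrow> (\<Sum>j<n. Bn z i j * A z (h j) (h k)) = of_bool (i = k)"
    and right: "\<And>z i k. z \<in> S \<Longrightarrow> i < n \<Longrightarrow> k < n \<Longrightarrow>
      (\<Sum>j<n. A z (h i) (h j) * Bn z j k) = of_bool (i = k)"
    using holomorphic_matrix_inverse_nat[of "\<lambda>z i j. A z (h i) (h j)" S n] hol inj_nat by blast
  have hi_eq: "hi x = hi w \<longleftrightarrow> x = w" if "x \<in> D" "w \<in> D" for x w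
    using that h_hi by metis
  show ?thesis
  proof
    show "(\<lambda>z. Bn z (hi x) (hi y)) holomorphic_on S" for x y
      by (rule hol_Bn)
    show "(\<Sum>y\<in>D. Bn z (hi x) (hi y) * A z y w) = of_bool (x = w)"
      if "z \<in> S" "x \<in> D" "w \<in> D" for z x w
      using left[OF that(1) hi_lt hi_lt] that by (simp add: reindex hi_h h_hi hi_eq)
    show "(\<Sum>y\<in>D. A z x y * Bn z (hi y) (hi w)) = of_bool (x = w)"
      if "z \<in> S" "x \<in> D" "w \<in> D" for z x w
      using right[OF that(1) hi_lt hi_lt] that by (simp add: reindex hi_h h_hi hi_eq)
  qed
qed

lemma sum_inverse_mult:
  fixes A B :: "'a \<Rightarrow> 'a \<Rightarrow> 'b::comm_semiring_1"
  assumes "finite D" "x \<in> D" "\<And>w. w \<in> D \<Longrightarrow> (\<Sum>y\<in>D. A x y * B y w) = of_bool (x = w)"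
  shows "(\<Sum>y\<in>D. A x y * (\<Sum>w\<in>D. B y w * v w)) = v x"
proof -
  have "(\<Sum>y\<in>D. A x y * (\<Sum>w\<in>D. B y w * v w)) = (\<Sum>y\<in>D. \<Sum>w\<in>D. A x y * B y w * v w)"
    by (simp add: sum_distrib_left mult.assoc)
  also have "\<dots> = (\<Sum>w\<in>D. \<Sum>y\<in>D. A x y * B y w * v w)"
    by (rule sum.swap)
  also have "\<dots> = (\<Sum>w\<in>D. (\<Sum>y\<in>D. A x y * B y w) * v w)"
    by (simp add: sum_distrib_right)
  also have "\<dots> = (\<Sum>w\<in>D. if x = w then v w else 0)"
    using assms(3) by (intro sum.cong) auto
  finally show ?thesis
    using assms(1,2) by simp
qed

section \<open>Hermitian forms\<close>

definition inner_on :: "'i set \<Rightarrow> ('i \<Rightarrow> complex) \<Rightarrow> ('i \<Rightarrow> complex) \<Rightarrow> complex" where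
  "inner_on I a b = (\<Sum>x\<in>I. cnj (a x) * b x)"

definition quad_form :: "'i set \<Rightarrow> ('i \<Rightarrow> 'i \<Rightarrow> complex) \<Rightarrow> ('i \<Rightarrow> complex) \<Rightarrow> complex" where
  "quad_form I M w = (\<Sum>x\<in>I. \<Sum>y\<in>I. cnj (w x) * M x y * w y)"

abbreviation cmat :: "('i \<Rightarrow> 'i \<Rightarrow> real) \<Rightarrow> 'i \<Rightarrow> 'i \<Rightarrow> complex" where
  "cmat S \<equiv> \<lambda>x y. complex_of_real (S x y)"

lemma quad_form_cmat: "quad_form I (cmat S) w = inner_on I w (mv I S w)"
  by (simp add: quad_form_def inner_on_def mv_def sum_distrib_left mult.assoc)

lemma inner_on_add_right: "inner_on I a (\<lambda>x. b x + c x) = inner_on I a b + inner_on I a c"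
  by (simp add: inner_on_def sum.distrib algebra_simps)

lemma inner_on_diff_right: "inner_on I a (\<lambda>x. b x - c x) = inner_on I a b - inner_on I a c"
  by (simp add: inner_on_def sum_subtractf algebra_simps)

lemma inner_on_mult_right: "inner_on I a (\<lambda>x. c * b x) = c * inner_on I a b"
  by (simp add: inner_on_def sum_distrib_left algebra_simps)

lemma inner_on_diff_left: "inner_on I (\<lambda>x. a x - b x) c = inner_on I a c - inner_on I b c"
  by (simp add: inner_on_def sum_subtractf algebra_simps)

lemma quad_form_support:
  assumes "finite I" "J \<subseteq> I" "\<And>x. x \<in> I - J \<Longrightarrow> w x = 0"
  shows "quad_form I M w = quad_form J M w"
proof -
  have "(\<Sum>y\<in>I. cnj (w x) * M x y * w y) = (\<Sum>y\<in>J. cnj (w x) * M x y * w y)" for x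
    using assms by (intro sum.mono_neutral_right) auto
  then have "quad_form I M w = (\<Sum>x\<in>I. \<Sum>y\<in>J. cnj (w x) * M x y * w y)"
    by (simp add: quad_form_def)
  also have "\<dots> = quad_form J M w"
    using assms unfolding quad_form_def by (intro sum.mono_neutral_right) auto
  finally show ?thesis .
qed

lemma Im_quad_form_hermitian:
  assumes "\<forall>x\<in>I. \<forall>y\<in>I. M y x = cnj (M x y)"
  shows "Im (quad_form I M w) = 0"
proof -
  have "cnj (quad_form I M w) = (\<Sum>x\<in>I. \<Sum>y\<in>I. cnj (w y) * M y x * w x)"
    unfolding quad_form_def cnj_sum
  proof (intro sum.cong refl)
    fix x y assume "x \<in> I" "y \<in> I"
    then have "M y x = cnj (M x y)"
      using assms by blast
    then show "cnj (cnj (w x) * M x y * w y) = cnj (w y) * M y x * w x"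
      by (simp add: algebra_simps)
  qed
  also have "\<dots> = quad_form I M w"
    unfolding quad_form_def by (rule sum.swap)
  finally show ?thesis
    by (simp add: complex_eq_iff)
qed

lemma hermitian_if_Im_quad_form_zero:
  assumes I: "finite I" and real: "\<And>w. Im (quad_form I M w) = 0" and x: "x \<in> I" and y: "y \<in> I"
  shows "M y x = cnj (M x y)"
proof -
  have diag: "Im (M z z) = 0" if "z \<in> I" for z
  proof -
    have "quad_form I M (\<lambda>u. of_bool (u = z)) = quad_form {z} M (\<lambda>u. of_bool (u = z))"
      using that by (intro quad_form_support[OF I]) auto
    then show ?thesis
      using real[of "\<lambda>u. of_bool (u = z)"] by (simp add: quad_form_def)
  qed
  show ?thesis
  proof (cases "x = y")
    case False
    define w :: "complex \<Rightarrow> _" where "w c u = (if u = x then 1 else if u = y then c else 0)" for c u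
    have qw: "quad_form I M (w c) = M x x + M x y * c + cnj c * M y x + cnj c * M y y * c" for c
    proof -
      have "quad_form I M (w c) = quad_form {x, y} M (w c)"
        using x y by (intro quad_form_support[OF I]) (auto simp: w_def)
      also have "\<dots> = M x x + M x y * c + cnj c * M y x + cnj c * M y y * c"
        using False unfolding quad_form_def w_def by (simp add: not_sym[OF False] add.assoc)
      finally show ?thesis .
    qed
    have "Im (M x x + M x y * 1 + cnj 1 * M y x + cnj 1 * M y y * 1) = 0"
      using real[of "w 1"] unfolding qw .
    moreover have "Im (M x x + M x y * \<i> + cnj \<i> * M y x + cnj \<i> * M y y * \<i>) = 0"
      using real[of "w \<i>"] unfolding qw .
    ultimately show ?thesis
      using diag[OF x] diag[OF y] by (simp add: complex_eq_iff)
  qed (use diag x in \<open>simp add: complex_eq_iff\<close>)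
qed

lemma herm_pd_quad_form:
  assumes "herm_pd I M"
  shows "Im (quad_form I M w) = 0" and "0 \<le> Re (quad_form I M w)"
    and "Re (quad_form I M w) = 0 \<Longrightarrow> x \<in> I \<Longrightarrow> w x = 0"
proof -
  show "Im (quad_form I M w) = 0"
    using assms unfolding herm_pd_def by (blast intro: Im_quad_form_hermitian)
  have pos: "0 < Re (quad_form I M w)" if "\<exists>x\<in>I. w x \<noteq> 0"
    using assms that unfolding herm_pd_def quad_form_def by blast
  show "0 \<le> Re (quad_form I M w)"
    using pos by (cases "\<exists>x\<in>I. w x \<noteq> 0") (auto simp: quad_form_def less_imp_le)
  show "w x = 0" if "Re (quad_form I M w) = 0" "x \<in> I"
    using pos that by force
qed

lemma herm_pd_imp_herm_psd: "herm_pd I M \<Longrightarrow> herm_psd I M"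
  using herm_pd_quad_form(2) unfolding herm_pd_def herm_psd_def quad_form_def by blast

lemma sum_herm_pd_quad_form:
  fixes w :: "'a \<Rightarrow> 'i \<Rightarrow> complex"
  assumes A: "finite A" and pd: "\<And>a. a \<in> A \<Longrightarrow> herm_pd (I a) (M a)"
  defines "s \<equiv> \<Sum>a\<in>A. quad_form (I a) (M a) (w a)"
  shows "Im s = 0" and "0 \<le> Re s" and "Re s = 0 \<Longrightarrow> a \<in> A \<Longrightarrow> x \<in> I a \<Longrightarrow> w a x = 0"
proof -
  show "Im s = 0"
    using herm_pd_quad_form(1)[OF pd] by (simp add: s_def Im_sum)
  have nonneg: "\<And>a. a \<in> A \<Longrightarrow> 0 \<le> Re (quad_form (I a) (M a) (w a))"
    using herm_pd_quad_form(2)[OF pd] by blast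
  then show "0 \<le> Re s"
    by (simp add: s_def Re_sum sum_nonneg)
  assume "Re s = 0" "a \<in> A" "x \<in> I a"
  then have "Re (quad_form (I a) (M a) (w a)) = 0"
    using nonneg A by (simp add: s_def Re_sum sum_nonneg_eq_0_iff)
  then show "w a x = 0"
    using herm_pd_quad_form(3)[OF pd] \<open>a \<in> A\<close> \<open>x \<in> I a\<close> by blast
qed

lemma herm_pd_of_spd:
  assumes "spd_on I S"
  shows "herm_pd I (cmat S)"
proof -
  define qf where "qf v = (\<Sum>x\<in>I. \<Sum>y\<in>I. v x * S x y * v y)" for v
  have qf_pos: "0 < qf v" if "\<exists>x\<in>I. v x \<noteq> 0" for v
    using assms that by (simp add: spd_on_def qf_def)
  have qf_nonneg: "0 \<le> qf v" for v
    using qf_pos by (cases "\<exists>x\<in>I. v x \<noteq> 0") (auto simp: qf_def less_imp_le)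
  have "Re (quad_form I (cmat S) w) = qf (\<lambda>x. Re (w x)) + qf (\<lambda>x. Im (w x))" for w
    by (simp add: quad_form_def qf_def Re_sum sum.distrib[symmetric] algebra_simps)
  moreover have "0 < qf (\<lambda>x. Re (w x)) + qf (\<lambda>x. Im (w x))" if "\<exists>x\<in>I. w x \<noteq> 0" for w
  proof -
    from that obtain x where "x \<in> I" "Re (w x) \<noteq> 0 \<or> Im (w x) \<noteq> 0"
      using complex_eq_iff by auto
    then show ?thesis
      using qf_pos[of "\<lambda>x. Re (w x)"] qf_pos[of "\<lambda>x. Im (w x)"] qf_nonneg
      by (meson add_pos_nonneg add_nonneg_pos)
  qed
  ultimately show ?thesis
    using assms by (simp add: herm_pd_def quad_form_def spd_on_def)
qed

lemma herm_pd_of_right_inverse: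
  assumes I: "finite I" and S: "spd_on I S"
    and inv: "\<And>x y. x \<in> I \<Longrightarrow> y \<in> I \<Longrightarrow> (\<Sum>z\<in>I. S x z * T z y) = (if x = y then 1 else 0)"
  shows "herm_pd I (cmat T)"
proof -
  have S_sym: "S x y = S y x" if "x \<in> I" "y \<in> I" for x y
    using S that by (simp add: spd_on_def)
  have undo: "mv I S (mv I T u) x = u x" if "x \<in> I" for u x
  proof -
    have "mv I S (mv I T u) x = (\<Sum>z\<in>I. \<Sum>y\<in>I. complex_of_real (S x z * T z y) * u y)"
      by (simp add: mv_def sum_distrib_left mult.assoc)
    also have "\<dots> = (\<Sum>y\<in>I. complex_of_real (\<Sum>z\<in>I. S x z * T z y) * u y)"
      by (subst sum.swap) (simp add: sum_distrib_right)
    also have "\<dots> = (\<Sum>y\<in>I. if x = y then u y else 0)"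
      using that by (intro sum.cong) (simp_all add: inv)
    also have "\<dots> = u x"
      using that I by simp
    finally show ?thesis .
  qed
  have transfer: "quad_form I (cmat T) u = quad_form I (cmat S) (mv I T u)" for u
  proof -
    define v where "v = mv I T u"
    have "quad_form I (cmat T) u = inner_on I (mv I S v) v"
      using undo by (simp add: quad_form_cmat inner_on_def v_def)
    also have "\<dots> = (\<Sum>x\<in>I. \<Sum>y\<in>I. cnj (v y) * S x y * v x)"
      by (simp add: inner_on_def mv_def sum_distrib_left sum_distrib_right
          mult.commute mult.left_commute)
    also have "\<dots> = (\<Sum>y\<in>I. \<Sum>x\<in>I. cnj (v y) * S y x * v x)"
      by (subst sum.swap) (auto intro!: sum.cong simp: S_sym)
    also have "\<dots> = quad_form I (cmat S) v"
      by (simp add: quad_form_def)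
    finally show ?thesis
      by (simp add: v_def)
  qed
  note S_pd = herm_pd_quad_form[OF herm_pd_of_spd[OF S]]
  have "Im (quad_form I (cmat T) u) = 0" for u
    unfolding transfer by (rule S_pd(1))
  then have herm: "\<forall>x\<in>I. \<forall>y\<in>I. cmat T y x = cnj (cmat T x y)"
    using hermitian_if_Im_quad_form_zero[OF I] by blast
  have "0 < Re (quad_form I (cmat T) u)" if "\<exists>x\<in>I. u x \<noteq> 0" for u
  proof (rule ccontr)
    assume "\<not> 0 < Re (quad_form I (cmat T) u)"
    then have "Re (quad_form I (cmat S) (mv I T u)) = 0"
      using S_pd(2)[of "mv I T u"] unfolding transfer by linarith
    then have "\<forall>x\<in>I. mv I T u x = 0"
      using S_pd(3) by blast
    then have "\<forall>x\<in>I. u x = 0"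
      using undo[of _ u] by (simp add: mv_def[of I S])
    with that show False
      by blast
  qed
  with herm show ?thesis
    unfolding herm_pd_def quad_form_def by blast
qed

lemma quad_form_mat_Im: "quad_form I (mat_Im M) w = of_real (Im (quad_form I M w))"
proof -
  have "quad_form I (mat_Im M) w =
      (quad_form I M w - (\<Sum>x\<in>I. \<Sum>y\<in>I. cnj (w x) * cnj (M y x) * w y)) / (2 * \<i>)"
    unfolding quad_form_def mat_Im_def
    by (simp add: sum_subtractf[symmetric] sum_divide_distrib[symmetric] algebra_simps)
  also have "(\<Sum>x\<in>I. \<Sum>y\<in>I. cnj (w x) * cnj (M y x) * w y) = cnj (quad_form I M w)"
    unfolding quad_form_def by (subst sum.swap) (simp add: mult.commute mult.left_commute)
  also have "(quad_form I M w - cnj (quad_form I M w)) / (2 * \<i>) = of_real (Im (quad_form I M w))"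
    by (simp add: complex_eq_iff)
  finally show ?thesis .
qed

lemma mat_Im_hermitian: "mat_Im M y x = cnj (mat_Im M x y)"
  by (simp add: mat_Im_def field_simps)

definition has_stieltjes_form :: "'i set \<Rightarrow> ('i \<Rightarrow> 'i \<Rightarrow> complex) \<Rightarrow> complex \<Rightarrow> bool" where
  "has_stieltjes_form I M lam \<longleftrightarrow> (\<forall>w. \<exists>p q. 0 \<le> p \<and> 0 \<le> q \<and>
     quad_form I M w = of_real q - cnj lam * of_real p \<and> ((\<exists>x\<in>I. w x \<noteq> 0) \<longrightarrow> 0 < p))"

lemma has_stieltjes_formD:
  assumes "has_stieltjes_form I M lam"
  shows "\<exists>p q. 0 \<le> p \<and> 0 \<le> q \<and> quad_form I M w = of_real q - cnj lam * of_real p \<and>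
    ((\<exists>x\<in>I. w x \<noteq> 0) \<longrightarrow> 0 < p)"
  using assms unfolding has_stieltjes_form_def by (rule spec)

lemma herm_pd_mat_Im_if_stieltjes_form:
  assumes "has_stieltjes_form I M lam" and "0 < Im lam"
  shows "herm_pd I (mat_Im M)"
proof -
  have "0 < Re (quad_form I (mat_Im M) w)" if nz: "\<exists>x\<in>I. w x \<noteq> 0" for w
  proof -
    obtain p q where "quad_form I M w = of_real q - cnj lam * of_real p" "0 < p"
      using has_stieltjes_formD[OF assms(1), where w = w] nz by blast
    then show ?thesis
      using assms(2) by (simp add: quad_form_mat_Im)
  qed
  moreover have "\<forall>x\<in>I. \<forall>y\<in>I. mat_Im M y x = cnj (mat_Im M x y)"
    by (intro ballI) (rule mat_Im_hermitian)
  ultimately show ?thesis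
    unfolding herm_pd_def quad_form_def by blast
qed

lemma herm_pd_if_stieltjes_form:
  assumes "finite I" and "has_stieltjes_form I M lam" and "Im lam = 0" and "Re lam < 0"
  shows "herm_pd I M"
proof -
  have form: "\<exists>p q. 0 \<le> q \<and> quad_form I M w = of_real (q + (- Re lam) * p) \<and>
      ((\<exists>x\<in>I. w x \<noteq> 0) \<longrightarrow> 0 < p)" for w
    using has_stieltjes_formD[OF assms(2), where w = w] assms(3) by (auto simp: complex_eq_iff)
  have "Im (quad_form I M w) = 0" for w
    using form[of w] by auto
  then have "\<forall>x\<in>I. \<forall>y\<in>I. M y x = cnj (M x y)"
    using hermitian_if_Im_quad_form_zero[OF assms(1)] by blast
  moreover have "0 < Re (quad_form I M w)" if nz: "\<exists>x\<in>I. w x \<noteq> 0" for w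
  proof -
    obtain p q where "0 \<le> q" "quad_form I M w = of_real (q + (- Re lam) * p)" "0 < p"
      using form[of w] nz by blast
    moreover have "0 < (- Re lam) * p"
      using assms(4) \<open>0 < p\<close> by (simp add: mult_neg_pos)
    ultimately show ?thesis
      by simp
  qed
  ultimately show ?thesis
    unfolding herm_pd_def quad_form_def by blast
qed

section \<open>The multiscale S-fraction system\<close>

type_synonym layered_field = "nat \<Rightarrow> nat \<Rightarrow> (nat \<times> nat) \<Rightarrow> complex"
type_synonym dof = "nat \<times> nat \<times> (nat \<times> nat)"

locale msfrom_system =
  fixes Nc m :: nat
    and adj :: "nat \<Rightarrow> nat \<Rightarrow> bool"
    and Kt :: "nat \<Rightarrow> nat \<Rightarrow> nat"
    and L Lh Lhi :: "nat \<Rightarrow> nat \<Rightarrow> (nat \<times> nat) \<Rightarrow> (nat \<times> nat) \<Rightarrow> real"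
  assumes m_pos: "1 \<le> m"
    and adj_sym: "\<And>i j. adj i j \<Longrightarrow> adj j i"
    and adj_irrefl: "\<And>i. \<not> adj i i"
    and Kt_sym: "\<And>i j. adj i j \<Longrightarrow> Kt i j = Kt j i"
    and L_spd: "\<And>i k. i < Nc \<Longrightarrow> 1 \<le> k \<Longrightarrow> k \<le> m \<Longrightarrow> spd_on (bnd Nc adj Kt i) (L i k)"
    and Lh_spd: "\<And>i k. i < Nc \<Longrightarrow> 1 \<le> k \<Longrightarrow> k \<le> m \<Longrightarrow> spd_on (bnd Nc adj Kt i) (Lh i k)"
    and Lhi_inv: "\<And>i k x y. i < Nc \<Longrightarrow> 1 \<le> k \<Longrightarrow> k \<le> m \<Longrightarrow>
        x \<in> bnd Nc adj Kt i \<Longrightarrow> y \<in> bnd Nc adj Kt i \<Longrightarrow>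
        (\<Sum>z\<in>bnd Nc adj Kt i. Lh i k x z * Lhi i k z y) = (if x = y then 1 else 0)"
begin

abbreviation "Bnd i \<equiv> bnd Nc adj Kt i"
abbreviation "Ifc \<equiv> iface Nc adj Kt"
abbreviation "solves \<equiv> msfrom_solves Nc adj Kt m L Lhi"

lemma bnd_iff: "(j, a) \<in> Bnd i \<longleftrightarrow> j < Nc \<and> adj i j \<and> a < Kt i j"
  by (simp add: bnd_def)

lemma iface_iff: "(i, j, a) \<in> Ifc \<longleftrightarrow> i < Nc \<and> j < Nc \<and> i < j \<and> adj i j \<and> a < Kt i j"
  by (simp add: iface_def)

lemma finite_bnd: "finite (Bnd i)"
  by (rule finite_subset[of _ "Sigma {..<Nc} (\<lambda>j. {..<Kt i j})"]) (auto simp: bnd_def)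

lemma finite_iface: "finite Ifc"
proof (rule finite_subset)
  show "Ifc \<subseteq> Sigma {..<Nc} Bnd"
    by (auto simp: iface_def bnd_def)
qed (simp add: finite_bnd)

definition dofs :: "dof set" where
  "dofs = {(i, k, x). i < Nc \<and> k \<in> {1..m} \<and> x \<in> Bnd i}"

lemma finite_dofs: "finite dofs"
proof -
  have "dofs = Sigma {..<Nc} (\<lambda>i. {1..m} \<times> Bnd i)"
    by (auto simp: dofs_def)
  then show ?thesis
    by (simp add: finite_bnd)
qed

definition vanishes_off_dofs :: "layered_field \<Rightarrow> bool" where
  "vanishes_off_dofs U \<longleftrightarrow> (\<forall>i k x. (i, k, x) \<notin> dofs \<longrightarrow> U i k x = 0)"

lemma vanishes_off_dofs_Suc_m:
  assumes "vanishes_off_dofs U"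
  shows "U i (m + 1) x = 0"
proof -
  have "(i, m + 1, x) \<notin> dofs"
    by (simp add: dofs_def)
  then show ?thesis
    using assms unfolding vanishes_off_dofs_def by blast
qed

definition flux :: "complex \<Rightarrow> layered_field \<Rightarrow> nat \<Rightarrow> (nat \<times> nat) \<Rightarrow> complex" where
  "flux lam U i x =
     mv (Bnd i) (L i 1) (\<lambda>y. U i 2 y - U i 1 y) x + lam * mv (Bnd i) (Lhi i 1) (U i 1) x"

definition interior_residual :: "complex \<Rightarrow> layered_field \<Rightarrow> nat \<Rightarrow> nat \<Rightarrow> (nat \<times> nat) \<Rightarrow> complex" where
  "interior_residual lam U i k x =
     mv (Bnd i) (L i k) (\<lambda>y. U i (k + 1) y - U i k y) x
     - mv (Bnd i) (L i (k - 1)) (\<lambda>y. U i k y - U i (k - 1) y) x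
     + lam * mv (Bnd i) (Lhi i k) (U i k) x"

lemma solves_iff_flux:
  "solves lam g U \<longleftrightarrow> vanishes_off_dofs U \<and>
    (\<forall>i<Nc. \<forall>k\<in>{2..m}. \<forall>x\<in>Bnd i. interior_residual lam U i k x = 0) \<and>
    (\<forall>(i, j, a)\<in>Ifc. flux lam U i (j, a) + flux lam U j (i, a) = g (i, j, a)) \<and>
    (\<forall>(i, j, a)\<in>Ifc. U i 1 (j, a) = U j 1 (i, a))"
proof -
  have "flux lam U i (j, a) + flux lam U j (i, a) =
      mv (Bnd i) (L i 1) (\<lambda>y. U i 2 y - U i 1 y) (j, a)
      + mv (Bnd j) (L j 1) (\<lambda>y. U j 2 y - U j 1 y) (i, a)
      + lam * (mv (Bnd i) (Lhi i 1) (U i 1) (j, a) + mv (Bnd j) (Lhi j 1) (U j 1) (i, a))" for i j a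
    by (simp add: flux_def algebra_simps)
  then show ?thesis
    unfolding msfrom_solves_def vanishes_off_dofs_def interior_residual_def by (auto simp: dofs_def)
qed

text \<open>Row \<open>(i, k, x)\<close> of the system with \<open>k \<ge> 2\<close> is the \<open>k\<close>-th recurrence of \<open>\<Omega>_i\<close>; row
  \<open>(i, 1, (j, a))\<close> is the flux balance on \<open>\<Gamma>_ij\<close> if \<open>i < j\<close> and the continuity condition on
  \<open>\<Gamma>_ji\<close> if \<open>j < i\<close>.\<close>

definition residual :: "complex \<Rightarrow> layered_field \<Rightarrow> dof \<Rightarrow> complex" where
  "residual lam U r = (case r of (i, k, (j, a)) \<Rightarrow>
     if 2 \<le> k then interior_residual lam U i k (j, a)
     else if i < j then flux lam U i (j, a) + flux lam U j (i, a)
     else U j 1 (i, a) - U i 1 (j, a))"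

definition load :: "(nat \<times> nat \<times> nat \<Rightarrow> complex) \<Rightarrow> dof \<Rightarrow> complex" where
  "load g r = (case r of (i, k, (j, a)) \<Rightarrow> if k = 1 \<and> i < j then g (i, j, a) else 0)"

lemma iface_flip_dof: "(i, j, a) \<in> Ifc \<Longrightarrow> (j, 1, (i, a)) \<in> dofs \<and> \<not> j < i"
  using m_pos adj_sym Kt_sym by (auto simp: dofs_def iface_iff bnd_iff)

lemma dofs_row_cases:
  assumes "(i, k, (j, a)) \<in> dofs"
  shows "2 \<le> k \<or> (k = 1 \<and> (i, j, a) \<in> Ifc) \<or> (k = 1 \<and> (j, i, a) \<in> Ifc)"
  using assms adj_sym Kt_sym
  by (auto simp: dofs_def iface_iff bnd_iff) (metis adj_irrefl linorder_neqE_nat)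

lemma solves_iff_residual:
  "solves lam g U \<longleftrightarrow> vanishes_off_dofs U \<and> (\<forall>r\<in>dofs. residual lam U r = load g r)"
proof -
  have "(\<forall>r\<in>dofs. residual lam U r = load g r) \<longleftrightarrow>
      (\<forall>i<Nc. \<forall>k\<in>{2..m}. \<forall>x\<in>Bnd i. interior_residual lam U i k x = 0) \<and>
      (\<forall>(i, j, a)\<in>Ifc. flux lam U i (j, a) + flux lam U j (i, a) = g (i, j, a)) \<and>
      (\<forall>(i, j, a)\<in>Ifc. U i 1 (j, a) = U j 1 (i, a))"
    (is "?rows \<longleftrightarrow> ?interior \<and> ?balance \<and> ?continuity")
  proof (intro iffI conjI)
    assume rows: ?rows
    show ?interior
    proof (intro allI impI ballI)
      fix i k x assume "i < Nc" "k \<in> {2..m}" "x \<in> Bnd i"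
      moreover obtain j a where "x = (j, a)"
        by fastforce
      ultimately show "interior_residual lam U i k x = 0"
        using rows[rule_format, of "(i, k, x)"] by (simp add: dofs_def residual_def load_def)
    qed
    show ?balance
      using rows m_pos by (force simp: dofs_def residual_def load_def iface_iff bnd_iff)
    show ?continuity
    proof clarify
      fix i j a assume "(i, j, a) \<in> Ifc"
      with iface_flip_dof[OF this] rows show "U i 1 (j, a) = U j 1 (i, a)"
        by (force simp: residual_def load_def)
    qed
  next
    assume eqs: "?interior \<and> ?balance \<and> ?continuity"
    show ?rows
    proof
      fix r assume r: "r \<in> dofs"
      obtain i k j a where r_eq: "r = (i, k, (j, a))"
        by (cases r) auto
      from dofs_row_cases[OF r[unfolded r_eq]] show "residual lam U r = load g r"
      proof (elim disjE conjE)
        assume "2 \<le> k"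
        then show ?thesis
          using eqs r by (simp add: r_eq residual_def load_def dofs_def)
      next
        assume "k = 1" and ij: "(i, j, a) \<in> Ifc"
        then show ?thesis
          using bspec[OF conjunct1[OF conjunct2[OF eqs]] ij]
          by (simp add: r_eq residual_def load_def iface_iff)
      next
        assume "k = 1" and ji: "(j, i, a) \<in> Ifc"
        then show ?thesis
          using bspec[OF conjunct2[OF conjunct2[OF eqs]] ji]
          by (simp add: r_eq residual_def load_def iface_iff)
      qed
    qed
  qed
  then show ?thesis
    unfolding solves_iff_flux by blast
qed

lemma residual_add:
  "residual lam (\<lambda>i k x. U i k x + V i k x) r = residual lam U r + residual lam V r"
  by (cases r) (auto simp: residual_def interior_residual_def flux_def mv_def
      sum.distrib sum_subtractf algebra_simps)

lemma residual_scale: "residual lam (\<lambda>i k x. c * U i k x) r = c * residual lam U r"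
  by (cases r) (auto simp: residual_def interior_residual_def flux_def mv_def
      sum_distrib_left algebra_simps)

lemma residual_sum:
  "finite C \<Longrightarrow> residual lam (\<lambda>i k x. \<Sum>c\<in>C. f c i k x) r = (\<Sum>c\<in>C. residual lam (f c) r)"
proof (induction C rule: finite_induct)
  case empty
  show ?case
    using residual_scale[where c = 0 and U = "\<lambda>i k x. 0"] by simp
next
  case (insert c C)
  then show ?case
    using residual_add[of lam "f c" "\<lambda>i k x. \<Sum>c\<in>C. f c i k x" r] by simp
qed

definition field_of :: "(dof \<Rightarrow> complex) \<Rightarrow> layered_field" where
  "field_of v i k x = (if (i, k, x) \<in> dofs then v (i, k, x) else 0)"

lemma field_of_cong: "(\<And>c. c \<in> dofs \<Longrightarrow> v c = w c) \<Longrightarrow> field_of v = field_of w"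
  unfolding field_of_def by (intro ext) (simp cong: if_cong)

lemma vanishes_off_dofs_field_of: "vanishes_off_dofs (field_of v)"
  by (simp add: vanishes_off_dofs_def field_of_def)

definition sys_mat :: "complex \<Rightarrow> dof \<Rightarrow> dof \<Rightarrow> complex" where
  "sys_mat lam r c = residual lam (\<lambda>i k x. of_bool ((i, k, x) = c)) r"

lemma residual_field_of: "residual lam (field_of v) r = (\<Sum>c\<in>dofs. sys_mat lam r c * v c)"
proof -
  have "(\<Sum>c\<in>dofs. v c * of_bool (p = c)) = (\<Sum>c\<in>dofs. if p = c then v c else 0)" for p
    by (intro sum.cong) auto
  then have "field_of v = (\<lambda>i k x. \<Sum>c\<in>dofs. v c * of_bool ((i, k, x) = c))"
    by (simp add: fun_eq_iff field_of_def finite_dofs)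
  then have "residual lam (field_of v) r =
      (\<Sum>c\<in>dofs. residual lam (\<lambda>i k x. v c * of_bool ((i, k, x) = c)) r)"
    by (simp only: residual_sum[OF finite_dofs])
  then show ?thesis
    by (simp only: residual_scale sys_mat_def mult.commute)
qed

lemma holomorphic_sys_mat: "(\<lambda>lam. sys_mat lam r c) holomorphic_on S"
proof -
  have eq: "(\<lambda>lam. sys_mat lam r c) = (\<lambda>lam. sys_mat 0 r c + lam * (sys_mat 1 r c - sys_mat 0 r c))"
    by (cases r)
      (auto simp: fun_eq_iff sys_mat_def residual_def interior_residual_def flux_def algebra_simps)
  show ?thesis
    unfolding eq by (intro holomorphic_intros)
qed

section \<open>The energy identity\<close>

definition mass :: "layered_field \<Rightarrow> complex" where
  "mass U = (\<Sum>i<Nc. \<Sum>k\<in>{1..m}. quad_form (Bnd i) (cmat (Lhi i k)) (U i k))"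

definition stiffness :: "layered_field \<Rightarrow> complex" where
  "stiffness U = (\<Sum>i<Nc. \<Sum>k\<in>{1..m}. quad_form (Bnd i) (cmat (L i k)) (\<lambda>x. U i (k + 1) x - U i k x))"

lemma layered_quad_form_pos_def:
  fixes M :: "nat \<Rightarrow> nat \<Rightarrow> (nat \<times> nat) \<Rightarrow> (nat \<times> nat) \<Rightarrow> complex"
    and W :: layered_field
  assumes pd: "\<forall>i<Nc. \<forall>k\<in>{1..m}. herm_pd (Bnd i) (M i k)"
  defines "s \<equiv> \<Sum>i<Nc. \<Sum>k\<in>{1..m}. quad_form (Bnd i) (M i k) (W i k)"
  shows "Im s = 0" and "0 \<le> Re s"
    and "Re s = 0 \<Longrightarrow> i < Nc \<Longrightarrow> k \<in> {1..m} \<Longrightarrow> x \<in> Bnd i \<Longrightarrow> W i k x = 0"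
proof -
  have s_eq: "s = (\<Sum>a\<in>{..<Nc} \<times> {1..m}.
      quad_form (Bnd (fst a)) (M (fst a) (snd a)) (W (fst a) (snd a)))"
    by (simp add: s_def sum.cartesian_product split_def)
  note props = sum_herm_pd_quad_form[of "{..<Nc} \<times> {1..m}" "\<lambda>a. Bnd (fst a)" "\<lambda>a. M (fst a) (snd a)"
      "\<lambda>a. W (fst a) (snd a)", folded s_eq]
  show "Im s = 0" "0 \<le> Re s"
    using props pd by auto
  show "W i k x = 0" if "Re s = 0" "i < Nc" "k \<in> {1..m}" "x \<in> Bnd i"
    using props(3)[of "(i, k)" x] pd that by auto
qed

lemma herm_pd_L: "\<forall>i<Nc. \<forall>k\<in>{1..m}. herm_pd (Bnd i) (cmat (L i k))"
  by (simp add: herm_pd_of_spd L_spd)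

lemma herm_pd_Lhi: "\<forall>i<Nc. \<forall>k\<in>{1..m}. herm_pd (Bnd i) (cmat (Lhi i k))"
  by (auto intro!: herm_pd_of_right_inverse[OF finite_bnd Lh_spd Lhi_inv])

lemma vanishes_off_dofs_eq_zero:
  assumes "vanishes_off_dofs U" and "\<And>i k x. i < Nc \<Longrightarrow> k \<in> {1..m} \<Longrightarrow> x \<in> Bnd i \<Longrightarrow> U i k x = 0"
  shows "U = (\<lambda>i k x. 0)"
proof (intro ext)
  fix i k x
  show "U i k x = 0"
    using assms unfolding vanishes_off_dofs_def dofs_def by blast
qed

lemma mass_pos_def:
  shows "Im (mass U) = 0" and "0 \<le> Re (mass U)"
    and "Re (mass U) = 0 \<Longrightarrow> vanishes_off_dofs U \<Longrightarrow> U = (\<lambda>i k x. 0)"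
proof -
  note props = layered_quad_form_pos_def[where M = "\<lambda>i k. cmat (Lhi i k)" and W = U, OF herm_pd_Lhi,
      folded mass_def]
  show "Im (mass U) = 0"
    by (rule props(1))
  show "0 \<le> Re (mass U)"
    by (rule props(2))
  show "U = (\<lambda>i k x. 0)" if "Re (mass U) = 0" "vanishes_off_dofs U"
    using props(3)[OF that(1)] by (intro vanishes_off_dofs_eq_zero[OF that(2)])
qed

lemma stiffness_pos_def:
  shows "Im (stiffness U) = 0" and "0 \<le> Re (stiffness U)"
    and "Re (stiffness U) = 0 \<Longrightarrow> vanishes_off_dofs U \<Longrightarrow> U = (\<lambda>i k x. 0)"
proof -
  note props = layered_quad_form_pos_def[where M = "\<lambda>i k. cmat (L i k)"
      and W = "\<lambda>i k x. U i (k + 1) x - U i k x",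
      OF herm_pd_L, folded stiffness_def]
  show "Im (stiffness U) = 0"
    by (rule props(1))
  show "0 \<le> Re (stiffness U)"
    by (rule props(2))
  assume zero: "Re (stiffness U) = 0" and off: "vanishes_off_dofs U"
  show "U = (\<lambda>i k x. 0)"
  proof (rule vanishes_off_dofs_eq_zero[OF off])
    fix i k x assume i: "i < Nc" and k: "k \<in> {1..m}" and x: "x \<in> Bnd i"
    \<comment> \<open>\<open>U_i^k\<close> does not depend on \<open>k\<close>, and \<open>U_i^{m+1} = 0\<close>.\<close>
    have descend: "U i (m + 1 - j) x = 0" if "j \<le> m" for j
      using that
    proof (induction j)
      case 0
      then show ?case
        using vanishes_off_dofs_Suc_m[OF off] by simp
    next
      case (Suc j)
      then have "U i (m - j + 1) x - U i (m - j) x = 0"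
        using props(3)[OF zero i, of "m - j" x] x by simp
      then show ?case
        using Suc by (simp add: Suc_diff_le)
    qed
    show "U i k x = 0"
      using descend[of "m + 1 - k"] k by auto
  qed
qed

lemma subdomain_energy:
  assumes off: "vanishes_off_dofs U"
    and recurrence: "\<forall>k\<in>{2..m}. \<forall>x\<in>Bnd i. interior_residual lam U i k x = 0"
  shows "inner_on (Bnd i) (U i 1) (flux lam U i) =
    lam * (\<Sum>k\<in>{1..m}. quad_form (Bnd i) (cmat (Lhi i k)) (U i k))
    - (\<Sum>k\<in>{1..m}. quad_form (Bnd i) (cmat (L i k)) (\<lambda>x. U i (k + 1) x - U i k x))"
proof -
  define d where "d k = (\<lambda>y. U i (k + 1) y - U i k y)" for k
  define T where "T k = inner_on (Bnd i) (U i k) (mv (Bnd i) (L i k) (d k))" for k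
  define T' where "T' k = inner_on (Bnd i) (U i (k + 1)) (mv (Bnd i) (L i k) (d k))" for k
  define H where "H k = quad_form (Bnd i) (cmat (Lhi i k)) (U i k)" for k
  define Q where "Q k = quad_form (Bnd i) (cmat (L i k)) (d k)" for k
  obtain p where m_eq: "m = Suc p"
    using m_pos by (cases m) auto
  have split_first: "sum f {1..m} = f 1 + sum f {2..m}" for f :: "nat \<Rightarrow> complex"
    using sum.atLeast_Suc_atMost[of 1 m f] m_pos by (simp add: numeral_2_eq_2)
  have flux_eq: "inner_on (Bnd i) (U i 1) (flux lam U i) = T 1 + lam * H 1"
    unfolding flux_def T_def H_def d_def
    by (simp add: quad_form_cmat inner_on_add_right inner_on_mult_right numeral_2_eq_2)
  have step: "T k + lam * H k = T' (k - 1)" if "k \<in> {2..m}" for k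
  proof -
    have "inner_on (Bnd i) (U i k) (\<lambda>x. mv (Bnd i) (L i k) (d k) x
        - mv (Bnd i) (L i (k - 1)) (d (k - 1)) x + lam * mv (Bnd i) (Lhi i k) (U i k) x) = 0"
      using recurrence that by (simp add: inner_on_def d_def interior_residual_def)
    then have "T k - T' (k - 1) + lam * H k = 0"
      using that unfolding T_def T'_def H_def
      by (simp add: inner_on_add_right inner_on_diff_right inner_on_mult_right quad_form_cmat)
    then show ?thesis
      by (simp add: diff_add_eq diff_eq_eq)
  qed
  have Q_eq: "Q k = T' k - T k" for k
    unfolding Q_def T'_def T_def quad_form_cmat d_def by (simp add: inner_on_diff_left)
  have "T' m = 0"
    using vanishes_off_dofs_Suc_m[OF off] by (simp add: T'_def inner_on_def)
  then have shift: "(\<Sum>k\<in>{2..m}. T' (k - 1)) = (\<Sum>k\<in>{1..m}. T' k)"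
    unfolding m_eq numeral_2_eq_2 sum.shift_bounds_cl_Suc_ivl by simp
  have "(\<Sum>k\<in>{2..m}. T k + lam * H k) = (\<Sum>k\<in>{2..m}. T' (k - 1))"
    by (rule sum.cong[OF refl]) (rule step)
  then have "(\<Sum>k\<in>{2..m}. T k) = (\<Sum>k\<in>{2..m}. T' (k - 1)) - lam * (\<Sum>k\<in>{2..m}. H k)"
    by (simp add: sum.distrib sum_distrib_left eq_diff_eq)
  then have "T 1 + lam * H 1 = lam * (\<Sum>k\<in>{1..m}. H k) - (\<Sum>k\<in>{1..m}. Q k)"
    unfolding Q_eq sum_subtractf shift split_first[of T] split_first[of H]
    by (simp add: algebra_simps)
  then show ?thesis
    unfolding flux_eq H_def Q_def d_def .
qed

definition flip :: "nat \<times> nat \<times> nat \<Rightarrow> nat \<times> nat \<times> nat" where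
  "flip t = (case t of (i, j, a) \<Rightarrow> (j, i, a))"

lemma Sigma_bnd_eq_iface_flip: "Sigma {..<Nc} Bnd = Ifc \<union> flip ` Ifc"
proof
  show "Sigma {..<Nc} Bnd \<subseteq> Ifc \<union> flip ` Ifc"
  proof
    fix p assume p_mem: "p \<in> Sigma {..<Nc} Bnd"
    obtain i j a where p: "p = (i, j, a)"
      by (cases p) auto
    have h: "i < Nc" "j < Nc" "adj i j" "a < Kt i j"
      using p_mem by (simp_all add: p bnd_iff)
    have "i \<noteq> j"
      using h(3) adj_irrefl by auto
    then consider "i < j" | "j < i"
      by linarith
    then show "p \<in> Ifc \<union> flip ` Ifc"
    proof cases
      case 1
      then show ?thesis
        using h by (simp add: p iface_iff)
    next
      case 2
      then have "(j, i, a) \<in> Ifc"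
        using h adj_sym Kt_sym by (simp add: iface_iff)
      moreover have "p = flip (j, i, a)"
        by (simp add: p flip_def)
      ultimately show ?thesis
        by blast
    qed
  qed
  show "Ifc \<union> flip ` Ifc \<subseteq> Sigma {..<Nc} Bnd"
    using adj_sym Kt_sym by (auto simp: iface_def bnd_def flip_def)
qed

lemma energy_identity:
  assumes "solves lam g U"
  shows "(\<Sum>t\<in>Ifc. cnj (msfrom_output U t) * g t) = lam * mass U - stiffness U"
proof -
  note eqs = assms[unfolded solves_iff_flux]
  define f where "f = (\<lambda>(i, x). cnj (U i 1 x) * flux lam U i x)"
  have "lam * mass U - stiffness U = (\<Sum>i<Nc. inner_on (Bnd i) (U i 1) (flux lam U i))"
    using subdomain_energy eqs by (simp add: mass_def stiffness_def sum_subtractf sum_distrib_left)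
  also have "\<dots> = (\<Sum>p\<in>Sigma {..<Nc} Bnd. f p)"
    by (simp add: sum.Sigma finite_bnd inner_on_def f_def)
  also have "\<dots> = (\<Sum>t\<in>Ifc. f t) + (\<Sum>t\<in>Ifc. f (flip t))"
  proof -
    have "inj_on flip Ifc" and "Ifc \<inter> flip ` Ifc = {}"
      by (auto simp: inj_on_def flip_def iface_def)
    then show ?thesis
      unfolding Sigma_bnd_eq_iface_flip by (simp add: sum.union_disjoint finite_iface sum.reindex)
  qed
  also have "\<dots> = (\<Sum>t\<in>Ifc. cnj (msfrom_output U t) * g t)"
    unfolding sum.distrib[symmetric]
  proof (rule sum.cong[OF refl], clarify)
    fix i j a assume t: "(i, j, a) \<in> Ifc"
    then have "U j 1 (i, a) = U i 1 (j, a)"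
      and "flux lam U i (j, a) + flux lam U j (i, a) = g (i, j, a)"
      using eqs by fastforce+
    then show "f (i, j, a) + f (flip (i, j, a)) = cnj (msfrom_output U (i, j, a)) * g (i, j, a)"
      by (simp add: f_def flip_def msfrom_output_def distrib_left[symmetric])
  qed
  finally show ?thesis
    by (rule sym)
qed

section \<open>The transfer function\<close>

lemma solves_homogeneous_eq_zero:
  assumes lam: "lam \<notin> pos_ray" and sol: "solves lam (\<lambda>t. 0) U"
  shows "U = (\<lambda>i k x. 0)"
proof -
  have off: "vanishes_off_dofs U"
    using sol solves_iff_flux by blast
  define p where "p = Re (mass U)"
  define q where "q = Re (stiffness U)"
  have "lam * of_real p = of_real q"
    using energy_identity[OF sol] mass_pos_def(1) stiffness_pos_def(1)
    by (simp add: p_def q_def complex_eq_iff)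
  show ?thesis
  proof (cases "q = 0")
    case True
    then show ?thesis
      using stiffness_pos_def(3) off by (simp add: q_def)
  next
    case False
    moreover have "p \<noteq> 0"
      using False \<open>lam * of_real p = of_real q\<close> by auto
    moreover have "0 \<le> p" "0 \<le> q"
      using mass_pos_def(2)[of U] stiffness_pos_def(2)[of U] by (simp_all add: p_def q_def)
    ultimately have "0 < q" "0 < p"
      by (simp_all add: less_le)
    then have "lam \<in> pos_ray"
      using \<open>lam * of_real p = of_real q\<close> unfolding pos_ray_def
      by (intro image_eqI[of _ _ "q / p"]) (auto simp: field_simps)
    with lam show ?thesis
      by blast
  qed
qed

lemma load_zero: "load (\<lambda>t. 0) r = 0"
  by (simp add: load_def split: prod.split)

lemma sys_mat_injective:
  assumes lam: "lam \<notin> pos_ray" and zero: "\<forall>r\<in>dofs. (\<Sum>c\<in>dofs. sys_mat lam r c * v c) = 0"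
  shows "\<forall>c\<in>dofs. v c = 0"
proof -
  have "solves lam (\<lambda>t. 0) (field_of v)"
    unfolding solves_iff_residual residual_field_of load_zero
    using zero vanishes_off_dofs_field_of by blast
  then have "field_of v = (\<lambda>i k x. 0)"
    by (rule solves_homogeneous_eq_zero[OF lam])
  show ?thesis
  proof
    fix c assume c: "c \<in> dofs"
    obtain i k x where "c = (i, k, x)"
      by (cases c) auto
    then show "v c = 0"
      using fun_cong[OF fun_cong[OF fun_cong[OF \<open>field_of v = _\<close>, of i], of k], of x] c
      by (simp add: field_of_def)
  qed
qed

definition dof_of :: "nat \<times> nat \<times> nat \<Rightarrow> dof" where
  "dof_of t = (case t of (i, j, a) \<Rightarrow> (i, 1, (j, a)))"

lemma sum_dofs_load: "(\<Sum>c\<in>dofs. h c * load g c) = (\<Sum>s\<in>Ifc. h (dof_of s) * g s)"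
proof -
  have "(\<Sum>c\<in>dofs. h c * load g c) = (\<Sum>c\<in>dof_of ` Ifc. h c * load g c)"
  proof (rule sum.mono_neutral_right[OF finite_dofs])
    show "dof_of ` Ifc \<subseteq> dofs"
      using m_pos by (auto simp: dof_of_def dofs_def iface_iff bnd_iff)
    show "\<forall>c\<in>dofs - dof_of ` Ifc. h c * load g c = 0"
    proof
      fix c assume c: "c \<in> dofs - dof_of ` Ifc"
      obtain i k j a where c_eq: "c = (i, k, (j, a))"
        by (cases c) auto
      have "\<not> (k = 1 \<and> i < j)"
      proof
        assume "k = 1 \<and> i < j"
        then have "(i, j, a) \<in> Ifc" and "c = dof_of (i, j, a)"
          using c by (auto simp: c_eq dofs_def bnd_iff iface_iff dof_of_def)
        with c show False
          by blast
      qed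
      then show "h c * load g c = 0"
        by (auto simp: c_eq load_def)
    qed
  qed
  also have "\<dots> = (\<Sum>s\<in>Ifc. h (dof_of s) * load g (dof_of s))"
    by (subst sum.reindex) (auto simp: inj_on_def dof_of_def)
  also have "\<dots> = (\<Sum>s\<in>Ifc. h (dof_of s) * g s)"
    by (rule sum.cong) (auto simp: dof_of_def load_def iface_iff)
  finally show ?thesis .
qed

lemma field_of_components: "vanishes_off_dofs U \<Longrightarrow> field_of (\<lambda>(i, k, x). U i k x) = U"
  unfolding vanishes_off_dofs_def field_of_def by (intro ext) auto

lemma output_field_of: "t \<in> Ifc \<Longrightarrow> msfrom_output (field_of v) t = v (dof_of t)"
  using m_pos
  by (cases t) (auto simp: msfrom_output_def field_of_def dof_of_def dofs_def iface_iff bnd_iff)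

lemma sys_mat_holomorphic_inverse:
  obtains B where "\<And>x y. (\<lambda>z. B z x y) holomorphic_on - pos_ray"
    and "\<And>z x w. z \<in> - pos_ray \<Longrightarrow> x \<in> dofs \<Longrightarrow> w \<in> dofs \<Longrightarrow>
      (\<Sum>y\<in>dofs. B z x y * sys_mat z y w) = of_bool (x = w)"
    and "\<And>z x w. z \<in> - pos_ray \<Longrightarrow> x \<in> dofs \<Longrightarrow> w \<in> dofs \<Longrightarrow>
      (\<Sum>y\<in>dofs. sys_mat z x y * B z y w) = of_bool (x = w)"
proof (rule holomorphic_matrix_inverse[where A = sys_mat and S = "- pos_ray",
      OF finite_dofs holomorphic_sys_mat])
  fix z v assume "z \<in> - pos_ray" "\<forall>x\<in>dofs. (\<Sum>y\<in>dofs. sys_mat z x y * v y) = 0"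
  then show "\<forall>y\<in>dofs. v y = 0"
    using sys_mat_injective by blast
qed (rule that)

lemma transfer_function_exists:
  obtains F where "\<And>t s. (\<lambda>z. F z t s) holomorphic_on - pos_ray"
    and "\<And>lam g. lam \<notin> pos_ray \<Longrightarrow> \<exists>!U. solves lam g U"
    and "\<And>lam g U. lam \<notin> pos_ray \<Longrightarrow> solves lam g U \<Longrightarrow>
      \<forall>t\<in>Ifc. msfrom_output U t = (\<Sum>s\<in>Ifc. F lam t s * g s)"
proof -
  obtain B where hol: "\<And>x y. (\<lambda>z. B z x y) holomorphic_on - pos_ray"
    and left: "\<And>z x w. z \<in> - pos_ray \<Longrightarrow> x \<in> dofs \<Longrightarrow> w \<in> dofs \<Longrightarrow>
      (\<Sum>y\<in>dofs. B z x y * sys_mat z y w) = of_bool (x = w)"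
    and right: "\<And>z x w. z \<in> - pos_ray \<Longrightarrow> x \<in> dofs \<Longrightarrow> w \<in> dofs \<Longrightarrow>
      (\<Sum>y\<in>dofs. sys_mat z x y * B z y w) = of_bool (x = w)"
    by (rule sys_mat_holomorphic_inverse) (rule that)
  define sol where "sol z g = field_of (\<lambda>r. \<Sum>c\<in>dofs. B z r c * load g c)" for z g
  have sol_solves: "solves z g (sol z g)" if z: "z \<in> - pos_ray" for z g
  proof -
    have "residual z (sol z g) r = load g r" if r: "r \<in> dofs" for r
      unfolding sol_def residual_field_of
      by (rule sum_inverse_mult[where A = "sys_mat z" and B = "B z",
            OF finite_dofs r right[OF z r]])
    then show ?thesis
      unfolding solves_iff_residual sol_def using vanishes_off_dofs_field_of by blast
  qed
  have sol_unique: "U = sol z g" if z: "z \<in> - pos_ray" and U: "solves z g U" for z g U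
  proof -
    define u where "u = (\<lambda>(i, k, x). U i k x)"
    have U_eq: "U = field_of u"
      using U field_of_components unfolding solves_iff_residual u_def by simp
    have "u r = (\<Sum>c\<in>dofs. B z r c * load g c)" if r: "r \<in> dofs" for r
    proof -
      have "u r = (\<Sum>y\<in>dofs. B z r y * (\<Sum>c\<in>dofs. sys_mat z y c * u c))"
        by (rule sum_inverse_mult[where A = "B z" and B = "sys_mat z",
              OF finite_dofs r left[OF z r], symmetric])
      also have "\<dots> = (\<Sum>y\<in>dofs. B z r y * load g y)"
        using U unfolding solves_iff_residual U_eq residual_field_of[symmetric] by simp
      finally show ?thesis .
    qed
    then show ?thesis
      unfolding U_eq sol_def by (rule field_of_cong)
  qed
  show ?thesis
  proof (rule that[of "\<lambda>z t s. B z (dof_of t) (dof_of s)"])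
    show "(\<lambda>z. B z (dof_of t) (dof_of s)) holomorphic_on - pos_ray" for t s
      by (rule hol)
    show "\<exists>!U. solves z g U" if "z \<notin> pos_ray" for z g
      using sol_solves sol_unique that by blast
    show "\<forall>t\<in>Ifc. msfrom_output U t = (\<Sum>s\<in>Ifc. B z (dof_of t) (dof_of s) * g s)"
      if "z \<notin> pos_ray" "solves z g U" for z g U
      using sol_unique[of z g U] that by (simp add: output_field_of sol_def sum_dofs_load)
  qed
qed

lemma has_stieltjes_form_transfer:
  assumes sol: "\<And>g. \<exists>U. solves lam g U"
    and rep: "\<And>g U. solves lam g U \<Longrightarrow> \<forall>t\<in>Ifc. msfrom_output U t = (\<Sum>s\<in>Ifc. F t s * g s)"
  shows "has_stieltjes_form Ifc (\<lambda>t s. - F t s) lam"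
  unfolding has_stieltjes_form_def
proof
  fix w
  obtain U where sol: "solves lam w U"
    using sol by blast
  define p where "p = Re (mass U)"
  define q where "q = Re (stiffness U)"
  have "quad_form Ifc (\<lambda>t s. - F t s) w = - (\<Sum>t\<in>Ifc. cnj (w t) * msfrom_output U t)"
    using rep[OF sol] by (simp add: quad_form_def sum_distrib_left sum_negf mult.assoc)
  also have "\<dots> = - cnj (\<Sum>t\<in>Ifc. cnj (msfrom_output U t) * w t)"
    by (simp add: mult.commute)
  also have "\<dots> = of_real q - cnj lam * of_real p"
    unfolding energy_identity[OF sol] using mass_pos_def(1) stiffness_pos_def(1)
    by (simp add: p_def q_def complex_eq_iff)
  finally have form: "quad_form Ifc (\<lambda>t s. - F t s) w = of_real q - cnj lam * of_real p" .
  have "0 < p" if "\<exists>t\<in>Ifc. w t \<noteq> 0"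
  proof (rule ccontr)
    assume "\<not> 0 < p"
    then have "Re (mass U) = 0"
      using mass_pos_def(2)[of U] unfolding p_def by linarith
    then have "U = (\<lambda>i k x. 0)"
      using mass_pos_def(3) sol solves_iff_flux by blast
    then have "\<forall>t\<in>Ifc. w t = 0"
      using sol unfolding solves_iff_flux by (auto simp: flux_def mv_def)
    with that show False
      by blast
  qed
  then show "\<exists>p q. 0 \<le> p \<and> 0 \<le> q \<and>
      quad_form Ifc (\<lambda>t s. - F t s) w = of_real q - cnj lam * of_real p \<and>
      ((\<exists>x\<in>Ifc. w x \<noteq> 0) \<longrightarrow> 0 < p)"
    using form mass_pos_def(2)[of U] stiffness_pos_def(2)[of U] unfolding p_def q_def
    by (intro exI[of _ p] exI[of _ q]) (simp add: p_def q_def)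
qed

lemma transfer_function_stieltjes:
  assumes hol: "\<And>t s. (\<lambda>z. F z t s) holomorphic_on - pos_ray"
    and sol: "\<And>lam g. lam \<notin> pos_ray \<Longrightarrow> \<exists>!U. solves lam g U"
    and rep: "\<And>lam g U. lam \<notin> pos_ray \<Longrightarrow> solves lam g U \<Longrightarrow>
      \<forall>t\<in>Ifc. msfrom_output U t = (\<Sum>s\<in>Ifc. F lam t s * g s)"
  shows "stieltjes_0inf Ifc (\<lambda>lam t s. - F lam t s)"
    and "0 < Im lam \<Longrightarrow> herm_pd Ifc (mat_Im (\<lambda>t s. - F lam t s))"
    and "r < 0 \<Longrightarrow> herm_pd Ifc (\<lambda>t s. - F (complex_of_real r) t s)"
proof -
  have form: "has_stieltjes_form Ifc (\<lambda>t s. - F lam t s) lam" if "lam \<notin> pos_ray" for lam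
  proof (rule has_stieltjes_form_transfer)
    show "\<exists>U. solves lam g U" for g
      using sol[OF that, of g] by (rule ex1_implies_ex)
  qed (rule rep[OF that])
  show pd_Im: "herm_pd Ifc (mat_Im (\<lambda>t s. - F lam t s))" if "0 < Im lam" for lam
    using that by (intro herm_pd_mat_Im_if_stieltjes_form[OF form]) (auto simp: pos_ray_def)
  show pd_neg: "herm_pd Ifc (\<lambda>t s. - F (complex_of_real r) t s)" if "r < 0" for r
    using that by (intro herm_pd_if_stieltjes_form[OF finite_iface form]) (auto simp: pos_ray_def)
  show "stieltjes_0inf Ifc (\<lambda>lam t s. - F lam t s)"
    unfolding stieltjes_0inf_def
    by (simp add: holomorphic_on_minus hol pd_Im pd_neg herm_pd_imp_herm_psd)
qed

end

theorem proposition1: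
  fixes Nc m :: nat
    and adj :: "nat \<Rightarrow> nat \<Rightarrow> bool"
    and Kt :: "nat \<Rightarrow> nat \<Rightarrow> nat"
    and L Lh Lhi :: "nat \<Rightarrow> nat \<Rightarrow> (nat \<times> nat) \<Rightarrow> (nat \<times> nat) \<Rightarrow> real"
  assumes m_pos: "1 \<le> m"
    and adj_sym: "\<And>i j. adj i j \<Longrightarrow> adj j i"
    and adj_irrefl: "\<And>i. \<not> adj i i"
    and Kt_sym: "\<And>i j. adj i j \<Longrightarrow> Kt i j = Kt j i"
    and L_spd: "\<And>i k. i < Nc \<Longrightarrow> 1 \<le> k \<Longrightarrow> k \<le> m \<Longrightarrow> spd_on (bnd Nc adj Kt i) (L i k)"
    and Lh_spd: "\<And>i k. i < Nc \<Longrightarrow> 1 \<le> k \<Longrightarrow> k \<le> m \<Longrightarrow> spd_on (bnd Nc adj Kt i) (Lh i k)"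
    and Lhi_inv: "\<And>i k x y. i < Nc \<Longrightarrow> 1 \<le> k \<Longrightarrow> k \<le> m \<Longrightarrow>
        x \<in> bnd Nc adj Kt i \<Longrightarrow> y \<in> bnd Nc adj Kt i \<Longrightarrow>
        (\<Sum>z\<in>bnd Nc adj Kt i. Lh i k x z * Lhi i k z y) = (if x = y then 1 else 0)"
  shows "\<exists>F :: complex \<Rightarrow> (nat \<times> nat \<times> nat) \<Rightarrow> (nat \<times> nat \<times> nat) \<Rightarrow> complex.
     (\<forall>lam. lam \<notin> pos_ray \<longrightarrow> (\<forall>g.
        (\<exists>!U. msfrom_solves Nc adj Kt m L Lhi lam g U) \<and>
        (\<forall>U. msfrom_solves Nc adj Kt m L Lhi lam g U \<longrightarrow>
           (\<forall>t\<in>iface Nc adj Kt. msfrom_output U t = (\<Sum>s\<in>iface Nc adj Kt. F lam t s * g s))))) \<and>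
     stieltjes_0inf (iface Nc adj Kt) (\<lambda>lam t s. - F lam t s) \<and>
     (\<forall>lam. 0 < Im lam \<longrightarrow> herm_pd (iface Nc adj Kt) (mat_Im (\<lambda>t s. - F lam t s))) \<and>
     (\<forall>r::real. r < 0 \<longrightarrow> herm_pd (iface Nc adj Kt) (\<lambda>t s. - F (complex_of_real r) t s))"
proof -
  interpret msfrom_system Nc m adj Kt L Lh Lhi
    by (rule msfrom_system.intro) (fact assms)+
  obtain F where hol: "\<And>t s. (\<lambda>z. F z t s) holomorphic_on - pos_ray"
    and sol: "\<And>lam g. lam \<notin> pos_ray \<Longrightarrow> \<exists>!U. solves lam g U"
    and rep: "\<And>lam g U. lam \<notin> pos_ray \<Longrightarrow> solves lam g U \<Longrightarrow>
      \<forall>t\<in>Ifc. msfrom_output U t = (\<Sum>s\<in>Ifc. F lam t s * g s)"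
    by (rule transfer_function_exists) (rule that)
  show ?thesis
    using sol rep transfer_function_stieltjes[OF hol sol rep] by blast
qed

end
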